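(* Let $n\ge 1$, let $Z$ be a vector space over $\mathbf{F}_2$, and let $V$ be the $\mathbf{F}_2$-space of all subsets of $I_n=\{1,\dots,n\}$ with addition the symmetric difference $\triangle$ (so the singletons $\{1\},\dots,\{n\}$ form a basis). Then $$Z^2(V,Z)=Z^2_0(V,Z)\oplus B^2(V,Z).$$
   Context: A cocycle is a map $f:V\times V\to Z$ satisfying, for all $v_1,v_2\in V$: $f(0,v_1)=0$, $f(v_1,v_1)=0$, $f(v_1,v_2)=f(v_2,v_1)$ and $f(v_1+v_2,v_2)=f(v_1,v_2)$ (here $0=\emptyset$). $Z^2(V,Z)$ is the $\mathbf{F}_2$-space of all cocycles. $B^2(V,Z)$ is the subspace of maps $\delta(g)(v_1,v_2)=g(v_1+v_2)+g(v_1)+g(v_2)$ where $g:V\to Z$ ranges over functions with $g(0)=0$. $Z^2_0(V,Z)$ is the subspace of cocycles $f$ such that $f(\sigma,\{i\})=0$ for every nonempty $\sigma\subseteq I_n$ and every $i\in I_n$ with $i>\max(\sigma)$. *)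

theory Defs
  imports Main
begin

definition symdiff :: "'a set \<Rightarrow> 'a set \<Rightarrow> 'a set" where
  "symdiff A B = (A - B) \<union> (B - A)"

definition Vn :: "nat \<Rightarrow> nat set set" where
  "Vn n = Pow {1..n}"

text \<open>Maps V x V -> Z are represented as functions that vanish outside V x V.\<close>
definition Z2 :: "nat \<Rightarrow> (nat set \<Rightarrow> nat set \<Rightarrow> 'z::ab_group_add) set" where
  "Z2 n = {f. (\<forall>a b. (a \<notin> Vn n \<or> b \<notin> Vn n) \<longrightarrow> f a b = 0) \<and>
     (\<forall>v1\<in>Vn n. \<forall>v2\<in>Vn n.
        f {} v1 = 0 \<and> f v1 v1 = 0 \<and> f v1 v2 = f v2 v1 \<and> f (symdiff v1 v2) v2 = f v1 v2)}"

definition B2 :: "nat \<Rightarrow> (nat set \<Rightarrow> nat set \<Rightarrow> 'z::ab_group_add) set" where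
  "B2 n = {(\<lambda>a b. if a \<in> Vn n \<and> b \<in> Vn n then g (symdiff a b) + g a + g b else 0)
            | g. g {} = 0}"

definition Z2_0 :: "nat \<Rightarrow> (nat set \<Rightarrow> nat set \<Rightarrow> 'z::ab_group_add) set" where
  "Z2_0 n = {f \<in> Z2 n. \<forall>\<sigma> i. \<sigma> \<noteq> {} \<and> \<sigma> \<subseteq> {1..n} \<and> i \<in> {1..n} \<and> i > Max \<sigma>
                 \<longrightarrow> f \<sigma> {i} = 0}"

end

theory Submission
  imports Defs
begin

text \<open>Every cocycle F is cohomologous to one in \<open>Z2_0\<close>: with the flag cochain
  g \<tau> = \<Sum>j\<in>\<tau>. F {x\<in>\<tau>. x < j} {j}, adding the largest element i to \<sigma> gives
  g (\<sigma> \<union> {i}) + g \<sigma> = F \<sigma> {i}, so \<delta>g agrees with F on all pairs (\<sigma>, {i}) with i > max \<sigma>.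
  Conversely, if \<delta>g vanishes on these pairs, induction on the largest element shows
  that g is additive, and in characteristic 2 the coboundary of an additive map is zero.\<close>

lemma symdiff_empty_left [simp]: "symdiff {} A = A"
  and symdiff_self [simp]: "symdiff A A = {}"
  and symdiff_symdiff_cancel [simp]: "symdiff (symdiff A B) B = A"
  unfolding symdiff_def by auto

lemma symdiff_commute: "symdiff A B = symdiff B A"
  unfolding symdiff_def by auto

lemma symdiff_singleton_notin: "i \<notin> A \<Longrightarrow> symdiff A {i} = insert i A"
  unfolding symdiff_def by auto

lemma symdiff_in_Vn: "A \<in> Vn n \<Longrightarrow> B \<in> Vn n \<Longrightarrow> symdiff A B \<in> Vn n"
  unfolding symdiff_def Vn_def by auto

lemma char2_add_eq_0_iff:
  fixes a b :: "'z::ab_group_add"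
  assumes char2: "\<And>z::'z. z + z = 0"
  shows "a + b = 0 \<longleftrightarrow> a = b"
  by (metis char2 minus_unique)

lemma sum_symdiff_char2:
  fixes h :: "'a \<Rightarrow> 'z::ab_group_add"
  assumes char2: "\<And>z::'z. z + z = 0" and "finite A" "finite B"
  shows "sum h (symdiff A B) = sum h A + sum h B"
proof -
  have "sum h (symdiff A B) = sum h (A - B) + sum h (B - A)"
    unfolding symdiff_def using assms(2,3) by (intro sum.union_disjoint) auto
  also have "\<dots> = sum h (A - B) + sum h (B - A) + (sum h (A \<inter> B) + sum h (A \<inter> B))"
    by (simp add: char2)
  also have "\<dots> = (sum h (A \<inter> B) + sum h (A - B)) + (sum h (B \<inter> A) + sum h (B - A))"
    by (simp add: ac_simps Int_commute)
  also have "\<dots> = sum h A + sum h B"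
    using assms(2,3) by (simp add: sum.Int_Diff[symmetric])
  finally show ?thesis .
qed

lemma Z2_add: "f \<in> Z2 n \<Longrightarrow> h \<in> Z2 n \<Longrightarrow> (\<lambda>a b. f a b + h a b) \<in> Z2 n"
  unfolding Z2_def by auto

lemma Z2_diff: "f \<in> Z2 n \<Longrightarrow> h \<in> Z2 n \<Longrightarrow> (\<lambda>a b. f a b - h a b) \<in> Z2 n"
  unfolding Z2_def by auto

lemma Z2_0_iff:
  "f \<in> Z2_0 n \<longleftrightarrow> f \<in> Z2 n \<and>
     (\<forall>\<sigma> i. \<sigma> \<noteq> {} \<and> \<sigma> \<subseteq> {1..n} \<and> i \<in> {1..n} \<and> (\<forall>x\<in>\<sigma>. x < i) \<longrightarrow> f \<sigma> {i} = 0)"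
proof -
  have "\<sigma> \<noteq> {} \<and> \<sigma> \<subseteq> {1..n} \<and> i \<in> {1..n} \<and> Max \<sigma> < i \<longleftrightarrow>
        \<sigma> \<noteq> {} \<and> \<sigma> \<subseteq> {1..n} \<and> i \<in> {1..n} \<and> (\<forall>x\<in>\<sigma>. x < i)" for \<sigma> and i :: nat
    using finite_subset[of \<sigma> "{1..n}"] Max_less_iff[of \<sigma> i] by blast
  then show ?thesis
    unfolding Z2_0_def by (simp only: mem_Collect_eq)
qed

definition coboundary :: "nat \<Rightarrow> (nat set \<Rightarrow> 'z::ab_group_add) \<Rightarrow> nat set \<Rightarrow> nat set \<Rightarrow> 'z" where
  "coboundary n g = (\<lambda>a b. if a \<in> Vn n \<and> b \<in> Vn n then g (symdiff a b) + g a + g b else 0)"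

lemma B2_eq_coboundary: "B2 n = {coboundary n g | g. g {} = 0}"
  unfolding B2_def coboundary_def by simp

lemma coboundary_in_Z2:
  fixes g :: "nat set \<Rightarrow> 'z::ab_group_add"
  assumes char2: "\<And>z::'z. z + z = 0" and "g {} = 0"
  shows "coboundary n g \<in> Z2 n"
  unfolding Z2_def
proof (intro CollectI conjI allI impI ballI)
  fix a b
  assume "a \<notin> Vn n \<or> b \<notin> Vn n"
  then show "coboundary n g a b = 0"
    unfolding coboundary_def by auto
next
  fix v1 v2
  assume v: "v1 \<in> Vn n" "v2 \<in> Vn n"
  moreover have "{} \<in> Vn n" and "symdiff v1 v2 \<in> Vn n"
    using symdiff_in_Vn[OF v] unfolding Vn_def by auto
  ultimately show "coboundary n g {} v1 = 0" "coboundary n g v1 v1 = 0"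
    and "coboundary n g (symdiff v1 v2) v2 = coboundary n g v1 v2"
    unfolding coboundary_def using assms by (simp_all add: ac_simps)
  show "coboundary n g v1 v2 = coboundary n g v2 v1"
    unfolding coboundary_def by (simp add: ac_simps symdiff_commute)
qed

lemma coboundary_singleton:
  assumes "\<sigma> \<subseteq> {1..n}" "i \<in> {1..n}" "i \<notin> \<sigma>"
  shows "coboundary n g \<sigma> {i} = g (insert i \<sigma>) + g \<sigma> + g {i}"
  using assms unfolding coboundary_def Vn_def by (simp add: symdiff_singleton_notin)

definition flag_cochain :: "(nat set \<Rightarrow> nat set \<Rightarrow> 'z::ab_group_add) \<Rightarrow> nat set \<Rightarrow> 'z" where
  "flag_cochain F \<tau> = (\<Sum>j\<in>\<tau>. F {x\<in>\<tau>. x < j} {j})"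

lemma flag_cochain_empty [simp]: "flag_cochain F {} = 0"
  unfolding flag_cochain_def by simp

lemma flag_cochain_singleton: "flag_cochain F {i} = F {} {i}"
  unfolding flag_cochain_def by (simp cong: conj_cong)

lemma flag_cochain_insert_greater:
  assumes "finite \<sigma>" "\<forall>x\<in>\<sigma>. x < i"
  shows "flag_cochain F (insert i \<sigma>) = F \<sigma> {i} + flag_cochain F \<sigma>"
proof -
  have "i \<notin> \<sigma>" and "{x \<in> insert i \<sigma>. x < i} = \<sigma>"
    using assms(2) by auto
  moreover have "{x \<in> insert i \<sigma>. x < j} = {x \<in> \<sigma>. x < j}" if "j \<in> \<sigma>" for j
    using assms(2) that by auto
  ultimately show ?thesis
    unfolding flag_cochain_def using assms(1) by simp
qed

lemma cocycle_diff_flag_coboundary_in_Z2_0: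
  fixes F :: "nat set \<Rightarrow> nat set \<Rightarrow> 'z::ab_group_add"
  assumes char2: "\<And>z::'z. z + z = 0" and F: "F \<in> Z2 n"
  shows "(\<lambda>a b. F a b - coboundary n (flag_cochain F) a b) \<in> Z2_0 n"
  unfolding Z2_0_iff
proof (intro conjI allI impI)
  show "(\<lambda>a b. F a b - coboundary n (flag_cochain F) a b) \<in> Z2 n"
    using F coboundary_in_Z2[where g = "flag_cochain F", OF char2 flag_cochain_empty] by (rule Z2_diff)
  fix \<sigma> i
  assume "\<sigma> \<noteq> {} \<and> \<sigma> \<subseteq> {1..n} \<and> i \<in> {1..n} \<and> (\<forall>x\<in>\<sigma>. x < i)"
  then have \<sigma>: "\<sigma> \<subseteq> {1..n}" and i: "i \<in> {1..n}" and less: "\<forall>x\<in>\<sigma>. x < i"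
    by auto
  have "F {} {i} = 0"
    using F i unfolding Z2_def Vn_def by auto
  moreover have "i \<notin> \<sigma>"
    using less by blast
  ultimately have "coboundary n (flag_cochain F) \<sigma> {i}
      = F \<sigma> {i} + (flag_cochain F \<sigma> + flag_cochain F \<sigma>)"
    using less \<sigma> i finite_subset[OF \<sigma> finite_atLeastAtMost]
    by (simp add: coboundary_singleton flag_cochain_insert_greater flag_cochain_singleton ac_simps)
  then show "F \<sigma> {i} - coboundary n (flag_cochain F) \<sigma> {i} = 0"
    by (simp add: char2)
qed

lemma additive_if_coboundary_vanishes_on_flags:
  fixes g :: "nat set \<Rightarrow> 'z::ab_group_add"
  assumes char2: "\<And>z::'z. z + z = 0" and "g {} = 0"
    and flags: "\<And>\<sigma> i. \<sigma> \<noteq> {} \<Longrightarrow> \<sigma> \<subseteq> {1..n} \<Longrightarrow> i \<in> {1..n} \<Longrightarrow> \<forall>x\<in>\<sigma>. x < i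
                  \<Longrightarrow> g (insert i \<sigma>) + g \<sigma> + g {i} = 0"
    and \<tau>: "\<tau> \<subseteq> {1..n}"
  shows "g \<tau> = (\<Sum>j\<in>\<tau>. g {j})"
  using finite_subset[OF \<tau> finite_atLeastAtMost] \<tau>
proof (induction \<tau> rule: finite_linorder_max_induct)
  case empty
  then show ?case using \<open>g {} = 0\<close> by simp
next
  case (insert i \<sigma>)
  then have "i \<notin> \<sigma>" by blast
  show ?case
  proof (cases "\<sigma> = {}")
    case True
    then show ?thesis by simp
  next
    case False
    then have "g (insert i \<sigma>) = g \<sigma> + g {i}"
      using flags[of \<sigma> i] insert by (simp add: add.assoc char2_add_eq_0_iff[OF char2])
    then show ?thesis
      using insert \<open>i \<notin> \<sigma>\<close> by (simp add: add.commute)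
  qed
qed

lemma coboundary_additive_eq_0:
  fixes g :: "nat set \<Rightarrow> 'z::ab_group_add"
  assumes char2: "\<And>z::'z. z + z = 0"
    and additive: "\<And>\<tau>. \<tau> \<subseteq> {1..n} \<Longrightarrow> g \<tau> = (\<Sum>j\<in>\<tau>. g {j})"
  shows "coboundary n g = (\<lambda>a b. 0)"
proof (intro ext)
  fix a b
  show "coboundary n g a b = 0"
  proof (cases "a \<in> Vn n \<and> b \<in> Vn n")
    case True
    then have "a \<subseteq> {1..n}" "b \<subseteq> {1..n}" "symdiff a b \<subseteq> {1..n}"
      using symdiff_in_Vn[of a n b] unfolding Vn_def by auto
    moreover have "finite a" "finite b"
      using calculation by (meson finite_atLeastAtMost finite_subset)+
    ultimately have "coboundary n g a b
        = ((\<Sum>j\<in>a. g {j}) + (\<Sum>j\<in>b. g {j})) + ((\<Sum>j\<in>a. g {j}) + (\<Sum>j\<in>b. g {j}))"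
      unfolding coboundary_def using True sum_symdiff_char2[OF char2] by (simp add: additive)
    then show ?thesis
      by (simp only: char2)
  qed (auto simp: coboundary_def)
qed

lemma Z2_eq_Z2_0_plus_B2:
  assumes char2: "\<And>z::'z::ab_group_add. z + z = 0"
  shows "Z2 n = {(\<lambda>a b. f a b + g a b) | f g. f \<in> (Z2_0 n :: (nat set \<Rightarrow> nat set \<Rightarrow> 'z) set) \<and> g \<in> B2 n}"
proof (intro set_eqI iffI)
  fix F :: "nat set \<Rightarrow> nat set \<Rightarrow> 'z"
  assume "F \<in> Z2 n"
  define G where "G = coboundary n (flag_cochain F)"
  have "(\<lambda>a b. F a b - G a b) \<in> Z2_0 n"
    unfolding G_def using \<open>F \<in> Z2 n\<close> by (rule cocycle_diff_flag_coboundary_in_Z2_0[OF char2])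
  moreover have "G \<in> B2 n"
    unfolding G_def B2_eq_coboundary by auto
  moreover have "F = (\<lambda>a b. (F a b - G a b) + G a b)"
    by simp
  ultimately show "F \<in> {(\<lambda>a b. f a b + g a b) | f g. f \<in> Z2_0 n \<and> g \<in> B2 n}"
    by (intro CollectI exI conjI)
next
  fix F :: "nat set \<Rightarrow> nat set \<Rightarrow> 'z"
  assume "F \<in> {(\<lambda>a b. f a b + g a b) | f g. f \<in> Z2_0 n \<and> g \<in> B2 n}"
  then obtain f g where F: "F = (\<lambda>a b. f a b + g a b)" and "f \<in> Z2_0 n" and "g \<in> B2 n"
    by blast
  then have "f \<in> Z2 n" and "g \<in> Z2 n"
    unfolding Z2_0_def B2_eq_coboundary using coboundary_in_Z2[OF char2] by auto
  then show "F \<in> Z2 n"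
    unfolding F by (rule Z2_add)
qed

lemma Z2_0_inter_B2:
  assumes char2: "\<And>z::'z::ab_group_add. z + z = 0"
  shows "Z2_0 n \<inter> B2 n = {(\<lambda>a b. 0 :: 'z)}"
proof (intro set_eqI iffI)
  fix F :: "nat set \<Rightarrow> nat set \<Rightarrow> 'z"
  assume "F \<in> Z2_0 n \<inter> B2 n"
  then obtain g where F: "F = coboundary n g" and "g {} = 0" and "F \<in> Z2_0 n"
    unfolding B2_eq_coboundary by blast
  then have "g (insert i \<sigma>) + g \<sigma> + g {i} = 0"
    if "\<sigma> \<noteq> {}" "\<sigma> \<subseteq> {1..n}" "i \<in> {1..n}" "\<forall>x\<in>\<sigma>. x < i" for \<sigma> i
    using that coboundary_singleton[of \<sigma> n i g] unfolding Z2_0_iff by auto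
  then have "coboundary n g = (\<lambda>a b. 0)"
    using additive_if_coboundary_vanishes_on_flags[where g = g, OF char2 \<open>g {} = 0\<close>]
    by (intro coboundary_additive_eq_0[OF char2]) blast
  then show "F \<in> {(\<lambda>a b. 0)}"
    using F by simp
next
  fix F :: "nat set \<Rightarrow> nat set \<Rightarrow> 'z"
  assume "F \<in> {(\<lambda>a b. 0)}"
  then have F: "F = (\<lambda>a b. 0)"
    by simp
  have "F = coboundary n (\<lambda>_. 0)"
    unfolding F coboundary_def by (intro ext) simp
  then have "F \<in> B2 n"
    unfolding B2_eq_coboundary by blast
  moreover have "F \<in> Z2_0 n"
    unfolding F Z2_0_def Z2_def by simp
  ultimately show "F \<in> Z2_0 n \<inter> B2 n"
    by blast
qed

theorem mainTheorem2:
  fixes n :: nat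
  assumes "n \<ge> 1"
    and char2: "\<forall>z::'z::ab_group_add. z + z = 0"
  shows "Z2 n = {(\<lambda>a b. f a b + g a b) | f g. f \<in> (Z2_0 n :: (nat set \<Rightarrow> nat set \<Rightarrow> 'z) set) \<and> g \<in> B2 n}
         \<and> Z2_0 n \<inter> B2 n = {(\<lambda>a b. 0 :: 'z)}"
proof -
  from char2 have char2': "\<And>z::'z. z + z = 0"
    by blast
  show ?thesis
    using Z2_eq_Z2_0_plus_B2[OF char2'] Z2_0_inter_B2[OF char2'] by (rule conjI)
qed

end
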